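(* Let $p$ be a prime and let $G$ be a $1$-tuple regular finite group of exponent $p^s$ for some $s\in\mathbb{N}$. Then $\Omega_{s-i}(G)=\mho^i(G)$ for every $i\in\{0,\ldots,s\}$.
   Context: For a finite $p$-group $G$ and $i\ge 0$, $\Omega_i(G)$ is the subgroup generated by all elements of order dividing $p^i$, and $\mho^i(G)$ is the subgroup generated by all $p^i$-th powers of elements of $G$. A finite group $G$ is $1$-tuple regular if for all $g_1,h_1\in G$ of the same order there is a bijection $\Psi\colon G\to G$ such that for every $g\in G$ the assignment $g_1\mapsto h_1, g\mapsto\Psi(g)$ defines an isomorphism $\langle g_1,g\rangle\to\langle h_1,\Psi(g)\rangle$. *)

theory Defs
  imports "HOL-Algebra.Algebra"
begin

definition Omega_sub :: "('a, 'b) monoid_scheme \<Rightarrow> nat \<Rightarrow> nat \<Rightarrow> 'a set" where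
  "Omega_sub G p i = generate G {x \<in> carrier G. group.ord G x dvd p ^ i}"

definition Mho_sub :: "('a, 'b) monoid_scheme \<Rightarrow> nat \<Rightarrow> nat \<Rightarrow> 'a set" where
  "Mho_sub G p i = generate G {x [^]\<^bsub>G\<^esub> (p ^ i) | x. x \<in> carrier G}"

definition group_exponent :: "('a, 'b) monoid_scheme \<Rightarrow> nat" where
  "group_exponent G = Lcm (group.ord G ` carrier G)"

definition one_tuple_regular :: "('a, 'b) monoid_scheme \<Rightarrow> bool" where
  "one_tuple_regular G \<longleftrightarrow>
    (\<forall>g1 \<in> carrier G. \<forall>h1 \<in> carrier G. group.ord G g1 = group.ord G h1 \<longrightarrow>
      (\<exists>\<Psi>. bij_betw \<Psi> (carrier G) (carrier G) \<and>
        (\<forall>g \<in> carrier G. \<exists>\<phi>.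
           \<phi> \<in> iso (G\<lparr>carrier := generate G {g1, g}\<rparr>) (G\<lparr>carrier := generate G {h1, \<Psi> g}\<rparr>)
           \<and> \<phi> g1 = h1 \<and> \<phi> g = \<Psi> g)))"

end

theory Submission
  imports Defs "HOL-Computational_Algebra.Primes"
begin

text \<open>
  Since all element orders are powers of \<open>p\<close>, some \<open>g\<close> has order \<open>p^s\<close>. If \<open>ord h\<close> divides
  \<open>p^(s-i)\<close>, then \<open>g\<close> has a power \<open>y\<close> such that \<open>a = y^(p^i)\<close> has the same order as \<open>h\<close>.
  1-tuple regularity yields an isomorphism \<open>\<langle>a, y\<rangle> \<rightarrow> \<langle>h, y'\<rangle>\<close> with \<open>a \<mapsto> h\<close> and
  \<open>y \<mapsto> y'\<close>, so \<open>h = y'^(p^i)\<close>. Thus the generating set of \<open>Omega_(s-i)\<close> lies in that of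
  \<open>Mho^i\<close>; the reverse inclusion holds in every group of exponent \<open>p^s\<close>.
\<close>

lemma Lcm_powers_mem:
  fixes p :: nat
  assumes "finite A" "A \<noteq> {}" "\<forall>x\<in>A. \<exists>k. x = p ^ k"
  shows "Lcm A \<in> A"
  using assms
proof (induction A rule: finite_ne_induct)
  case (singleton x)
  then show ?case by simp
next
  case (insert x A)
  then obtain k l where "x = p ^ k" "Lcm A = p ^ l" "Lcm A \<in> A"
    by blast
  then have "x dvd Lcm A \<or> Lcm A dvd x"
    by (metis le_imp_power_dvd nat_le_linear)
  then show ?case
    using \<open>Lcm A \<in> A\<close> by auto
qed

context group
begin

lemma ord_dvd_group_exponent:
  "x \<in> carrier G \<Longrightarrow> ord x dvd group_exponent G"
  unfolding group_exponent_def by (simp add: dvd_Lcm)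

lemma ord_pow_dvd_if_group_exponent_eq:
  assumes "group_exponent G = n * m" "x \<in> carrier G"
  shows "ord (x [^] n) dvd m"
proof -
  have "(x [^] n) [^] m = \<one>"
    using assms ord_dvd_group_exponent[OF assms(2)] by (simp add: nat_pow_pow pow_eq_id)
  then show ?thesis
    using assms(2) by (simp add: pow_eq_id)
qed

lemma group_exponent_prime_power_attained:
  assumes "finite (carrier G)" "Factorial_Ring.prime p" "group_exponent G = p ^ s"
  obtains g where "g \<in> carrier G" "ord g = p ^ s"
proof -
  have "\<forall>d \<in> ord ` carrier G. \<exists>k. d = p ^ k"
  proof
    fix d assume "d \<in> ord ` carrier G"
    then have "d dvd p ^ s"
      using ord_dvd_group_exponent assms(3) by auto
    then show "\<exists>k. d = p ^ k"
      using divides_primepow_nat[OF assms(2)] by blast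
  qed
  then have "Lcm (ord ` carrier G) \<in> ord ` carrier G"
    using assms(1) by (intro Lcm_powers_mem) auto
  then show ?thesis
    using that assms(3) unfolding group_exponent_def by auto
qed

lemma one_tuple_regular_pow_if_ord_eq:
  fixes n :: nat
  assumes "one_tuple_regular G" "y \<in> carrier G" "h \<in> carrier G" "ord (y [^] n) = ord h"
  obtains x where "x \<in> carrier G" "h = x [^] n"
proof -
  let ?a = "y [^] n"
  obtain \<Psi> where \<Psi>: "bij_betw \<Psi> (carrier G) (carrier G)"
    and iso_ex: "\<And>g. g \<in> carrier G \<Longrightarrow> \<exists>\<phi>.
      \<phi> \<in> iso (G\<lparr>carrier := generate G {?a, g}\<rparr>) (G\<lparr>carrier := generate G {h, \<Psi> g}\<rparr>)
      \<and> \<phi> ?a = h \<and> \<phi> g = \<Psi> g"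
    using assms(1)[unfolded one_tuple_regular_def, rule_format, OF nat_pow_closed[OF assms(2)] assms(3,4)]
    by blast
  obtain \<phi> where \<phi>: "\<phi> \<in> iso (G\<lparr>carrier := generate G {?a, y}\<rparr>) (G\<lparr>carrier := generate G {h, \<Psi> y}\<rparr>)"
      "\<phi> ?a = h" "\<phi> y = \<Psi> y"
    using iso_ex[OF assms(2)] by blast
  have \<Psi>y: "\<Psi> y \<in> carrier G"
    using \<Psi> assms(2) bij_betwE by blast
  have "\<phi> (y [^]\<^bsub>G\<lparr>carrier := generate G {?a, y}\<rparr>\<^esub> n)
      = \<phi> y [^]\<^bsub>G\<lparr>carrier := generate G {h, \<Psi> y}\<rparr>\<^esub> n"
    using \<phi>(1) assms(2,3) \<Psi>y
    by (intro hom_nat_pow) (auto simp: iso_def generate.incl intro: subgroup_imp_group generate_is_subgroup)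
  then have "h = \<Psi> y [^] n"
    using \<phi>(2,3) by (simp flip: nat_pow_consistent)
  then show ?thesis
    using that \<Psi>y by blast
qed

lemma one_tuple_regular_pow_if_ord_dvd:
  assumes "one_tuple_regular G" "g \<in> carrier G" "h \<in> carrier G"
    and "ord h * n dvd ord g" "ord g \<noteq> 0"
  obtains x where "x \<in> carrier G" "h = x [^] n"
proof -
  obtain k where k: "ord g = ord h * n * k"
    using assms(4) by blast
  have "ord ((g [^] k) [^] n) = ord g div (k * n)"
    using assms(2,5) k by (simp add: nat_pow_pow ord_pow)
  also have "\<dots> = ord h"
    using assms(5) k by simp
  finally show ?thesis
    using that one_tuple_regular_pow_if_ord_eq[OF assms(1) nat_pow_closed[OF assms(2)] assms(3)]
    by blast
qed

lemma one_tuple_regular_low_order_eq_powers: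
  assumes "finite (carrier G)" "one_tuple_regular G"
    and "g \<in> carrier G" "ord g = group_exponent G" "group_exponent G = n * m"
  shows "{x \<in> carrier G. ord x dvd m} = {x [^] n | x. x \<in> carrier G}"
proof (intro equalityI subsetI)
  fix h assume "h \<in> {x \<in> carrier G. ord x dvd m}"
  then have "h \<in> carrier G" "ord h * n dvd ord g"
    using assms(4,5) by (auto simp: mult.commute)
  moreover have "ord g \<noteq> 0"
    using ord_ge_1 assms(1,3) by fastforce
  ultimately obtain x where "x \<in> carrier G" "h = x [^] n"
    using one_tuple_regular_pow_if_ord_dvd[OF assms(2,3)] by blast
  then show "h \<in> {x [^] n | x. x \<in> carrier G}"
    by blast
next
  fix h assume "h \<in> {x [^] n | x. x \<in> carrier G}"
  then show "h \<in> {x \<in> carrier G. ord x dvd m}"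
    using ord_pow_dvd_if_group_exponent_eq assms(5) by auto
qed

end

theorem lemma4p3:
  fixes G (structure) and p s :: nat
  assumes "Factorial_Ring.prime p"
    and "group G" and "finite (carrier G)"
    and "one_tuple_regular G"
    and "group_exponent G = p ^ s"
  shows "\<forall>i \<in> {0..s}. Omega_sub G p (s - i) = Mho_sub G p i"
proof
  interpret group G by fact
  fix i assume "i \<in> {0..s}"
  then have "group_exponent G = p ^ i * p ^ (s - i)"
    using assms(5) by (simp flip: power_add)
  moreover obtain g where "g \<in> carrier G" "ord g = group_exponent G"
    using group_exponent_prime_power_attained assms(1,3,5) by auto
  ultimately have "{x \<in> carrier G. ord x dvd p ^ (s - i)} = {x [^] p ^ i | x. x \<in> carrier G}"
    using one_tuple_regular_low_order_eq_powers assms(3,4) by blast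
  then show "Omega_sub G p (s - i) = Mho_sub G p i"
    unfolding Omega_sub_def Mho_sub_def by simp
qed

end
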